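(* Let $M=\mathbb R^3$ with the Euclidean metric, $\mathcal D=[0,1]$, and let $r,h:I\to\mathbb R$ be smooth with $r>0$ and $h$ nowhere zero. Consider the path of helices $c(s,t)=(r(s)\cos t,\ r(s)\sin t,\ h(s)t)$. Then $c$ is horizontal and a geodesic if and only if $h'=0$ and \[ \Big((r')^2\Big(\sqrt{r^2+h^2}+\frac{1}{\sqrt{r^2+h^2}}\Big)\Big)'=0. \]
   Context: $I=[0,1]$; $'$ denotes $\partial_s$. For a path $c:I\times\mathcal D\to\mathbb R^3$ of immersed curves write $\dot c=\partial_t c$, $c'=\partial_s c$, $\omega=|\dot c|>0$, $T=\dot c/\omega$, and $\nabla_TX=\omega^{-1}\partial_tX$ for vector fields $X$ along $c$. With $\eta=c'-\nabla_T\nabla_T c'$, the path is called horizontal if $\langle\eta,T\rangle=0$ everywhere on $I\times\mathcal D$. The first order Sobolev metric is $G_{\gamma}(h,k)=\int_{\mathcal D} \big(\langle h,k\rangle+\langle\nabla_Th,\nabla_Tk\rangle\big)\,\omega\,dt$, the speed is $\nu(s)=\sqrt{G_{c(s,\cdot)}(c',c')}$, and following the paper the path is called a geodesic if $\nu$ is constant in $s$. *)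

theory Defs
  imports "HOL-Analysis.Analysis"
begin

text \<open>Parameter interval I = [0,1] (variable s) and curve domain D = [0,1] (variable t).
  All derivatives are taken within the closed interval (one-sided at the endpoints).\<close>

definition Iv :: "real set" where "Iv = {0..1}"
definition Dv :: "real set" where "Dv = {0..1}"

definition smooth_on :: "real set \<Rightarrow> (real \<Rightarrow> real) \<Rightarrow> bool" where
  "smooth_on S f \<longleftrightarrow> (\<exists>Df. Df 0 = f \<and>
      (\<forall>k. \<forall>x\<in>S. (Df k has_real_derivative Df (Suc k) x) (at x within S)))"

definition dI :: "(real \<Rightarrow> real) \<Rightarrow> real \<Rightarrow> real" where
  "dI f s = vector_derivative f (at s within Iv)"

definition pds :: "(real \<Rightarrow> real \<Rightarrow> real^3) \<Rightarrow> real \<Rightarrow> real \<Rightarrow> real^3" where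
  "pds c s t = vector_derivative (\<lambda>s'. c s' t) (at s within Iv)"

definition pdt :: "(real \<Rightarrow> real \<Rightarrow> real^3) \<Rightarrow> real \<Rightarrow> real \<Rightarrow> real^3" where
  "pdt c s t = vector_derivative (\<lambda>t'. c s t') (at t within Dv)"

definition cdot :: "(real \<Rightarrow> real^3) \<Rightarrow> real \<Rightarrow> real^3" where
  "cdot \<gamma> t = vector_derivative \<gamma> (at t within Dv)"

definition omega :: "(real \<Rightarrow> real^3) \<Rightarrow> real \<Rightarrow> real" where
  "omega \<gamma> t = norm (cdot \<gamma> t)"

definition Tvec :: "(real \<Rightarrow> real^3) \<Rightarrow> real \<Rightarrow> real^3" where
  "Tvec \<gamma> t = (1 / omega \<gamma> t) *\<^sub>R cdot \<gamma> t"

definition nablaT :: "(real \<Rightarrow> real^3) \<Rightarrow> (real \<Rightarrow> real^3) \<Rightarrow> real \<Rightarrow> real^3" where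
  "nablaT \<gamma> X t = (1 / omega \<gamma> t) *\<^sub>R vector_derivative X (at t within Dv)"

definition eta :: "(real \<Rightarrow> real \<Rightarrow> real^3) \<Rightarrow> real \<Rightarrow> real \<Rightarrow> real^3" where
  "eta c s t = pds c s t - nablaT (c s) (nablaT (c s) (pds c s)) t"

definition horizontal :: "(real \<Rightarrow> real \<Rightarrow> real^3) \<Rightarrow> bool" where
  "horizontal c \<longleftrightarrow> (\<forall>s\<in>Iv. \<forall>t\<in>Dv. eta c s t \<bullet> Tvec (c s) t = 0)"

definition Gmet :: "(real \<Rightarrow> real^3) \<Rightarrow> (real \<Rightarrow> real^3) \<Rightarrow> (real \<Rightarrow> real^3) \<Rightarrow> real" where
  "Gmet \<gamma> h k = integral Dv (\<lambda>t. (h t \<bullet> k t + nablaT \<gamma> h t \<bullet> nablaT \<gamma> k t) * omega \<gamma> t)"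

definition speed :: "(real \<Rightarrow> real \<Rightarrow> real^3) \<Rightarrow> real \<Rightarrow> real" where
  "speed c s = sqrt (Gmet (c s) (pds c s) (pds c s))"

text \<open>Geodesic in the sense of the paper: the speed nu is constant in s.\<close>
definition geodesic :: "(real \<Rightarrow> real \<Rightarrow> real^3) \<Rightarrow> bool" where
  "geodesic c \<longleftrightarrow> (\<exists>v. \<forall>s\<in>Iv. speed c s = v)"

definition helix_path :: "(real \<Rightarrow> real) \<Rightarrow> (real \<Rightarrow> real) \<Rightarrow> real \<Rightarrow> real \<Rightarrow> real^3" where
  "helix_path r h s t = vector [r s * cos t, r s * sin t, h s * t]"

end

theory Submission
  imports Defs
begin

text \<open>For the helix path with s-derivatives r', h', the tangent speed is
  w = sqrt (r^2 + h^2), independent of t, and a direct computation gives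
  \<langle>\<eta>, T\<rangle> = h h' t / w.  Horizontality therefore forces h' = 0, and then
  G(c', c') = (r'^2 + r'^2 / w^2) w = r'^2 (w + 1/w) pointwise in t; the path is a
  geodesic iff this quantity is constant in s, i.e. iff its derivative vanishes.\<close>

lemma vector_derivative_within_unit_interval:
  assumes "x \<in> {0..1}" "(f has_vector_derivative f') (at x within {0..1})"
  shows "vector_derivative f (at x within {0..(1::real)}) = f'"
  using vector_derivative_within_cbox[of 0 1 x f f'] assms by simp

lemma dI_eq_derivative:
  assumes "s \<in> Iv" "(f has_real_derivative D) (at s within Iv)"
  shows "dI f s = D"
  using assms vector_derivative_within_unit_interval
  unfolding dI_def Iv_def has_real_derivative_iff_has_vector_derivative by blast

lemma dI_cong:
  assumes "s \<in> Iv" "\<And>x. x \<in> Iv \<Longrightarrow> f x = g x"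
  shows "dI f s = dI g s"
  unfolding dI_def using assms by (intro vector_derivative_cong_eq) auto

lemma dI_eq_0_iff_constant_on:
  assumes "\<And>s. s \<in> Iv \<Longrightarrow> f differentiable (at s within Iv)"
  shows "(\<forall>s\<in>Iv. dI f s = 0) \<longleftrightarrow> (\<exists>v. \<forall>s\<in>Iv. f s = v)"
proof
  assume "\<forall>s\<in>Iv. dI f s = 0"
  then have "(f has_field_derivative 0) (at s within Iv)" if s: "s \<in> Iv" for s
  proof -
    obtain D where "(f has_real_derivative D) (at s within Iv)"
      using assms[OF s] real_differentiable_def by blast
    with \<open>\<forall>s\<in>Iv. dI f s = 0\<close> s show ?thesis
      using dI_eq_derivative by force
  qed
  then show "\<exists>v. \<forall>s\<in>Iv. f s = v"
    by (intro has_field_derivative_zero_constant) (auto simp: Iv_def)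
next
  assume "\<exists>v. \<forall>s\<in>Iv. f s = v"
  then obtain v where "\<And>s. s \<in> Iv \<Longrightarrow> f s = v" by blast
  then have "(f has_real_derivative 0) (at s within Iv)" if "s \<in> Iv" for s
    using has_vector_derivative_transform[OF that _ has_vector_derivative_const[of v]]
    unfolding has_real_derivative_iff_has_vector_derivative by auto
  then show "\<forall>s\<in>Iv. dI f s = 0"
    using dI_eq_derivative by blast
qed

lemma smooth_on_derivative:
  assumes "smooth_on S f"
  obtains f' where "\<And>x. x \<in> S \<Longrightarrow> (f has_real_derivative f' x) (at x within S)" "smooth_on S f'"
proof -
  obtain Df where "Df 0 = f" "\<And>k x. x \<in> S \<Longrightarrow> (Df k has_real_derivative Df (Suc k) x) (at x within S)"
    using assms unfolding smooth_on_def by blast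
  moreover have "smooth_on S (Df 1)"
    unfolding smooth_on_def using calculation(2) by (intro exI[of _ "\<lambda>k. Df (Suc k)"]) simp
  ultimately show thesis
    using that[of "Df 1"] by (metis One_nat_def)
qed

lemma vector3_eq_sum_axis:
  "(vector [a, b, c] :: real^3) = a *\<^sub>R axis 1 1 + b *\<^sub>R axis 2 1 + c *\<^sub>R axis 3 1"
  by (simp add: vec_eq_iff forall_3 axis_def)

lemma inner_vector3: "(vector [a, b, c] :: real^3) \<bullet> vector [d, e, f] = a * d + b * e + c * f"
  by (simp add: inner_vec_def sum_3)

lemma scaleR_vector3: "k *\<^sub>R (vector [a, b, c] :: real^3) = vector [k * a, k * b, k * c]"
  by (simp add: vec_eq_iff forall_3)

lemma diff_vector3: "(vector [a, b, c] :: real^3) - vector [d, e, f] = vector [a - d, b - e, c - f]"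
  by (simp add: vec_eq_iff forall_3)

lemma has_vector_derivative_vector3:
  assumes "(f1 has_real_derivative d1) (at x within S)"
    and "(f2 has_real_derivative d2) (at x within S)"
    and "(f3 has_real_derivative d3) (at x within S)"
  shows "((\<lambda>x. vector [f1 x, f2 x, f3 x] :: real^3) has_vector_derivative vector [d1, d2, d3])
    (at x within S)"
proof -
  have "((\<lambda>x. f x *\<^sub>R (axis i 1 :: real^3)) has_vector_derivative d *\<^sub>R axis i 1) (at x within S)"
    if "(f has_real_derivative d) (at x within S)" for f d i
    using has_vector_derivative_scaleR[OF that has_vector_derivative_const] by simp
  then show ?thesis
    unfolding vector3_eq_sum_axis using assms by (intro has_vector_derivative_add)
qed

lemma cdot_helix_path:
  assumes "t \<in> Dv"
  shows "cdot (helix_path r h s) t = vector [- (r s * sin t), r s * cos t, h s]"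
  unfolding cdot_def helix_path_def using assms
  by (intro vector_derivative_within_unit_interval[folded Dv_def] has_vector_derivative_vector3)
    (auto simp: Dv_def intro!: derivative_eq_intros)

lemma omega_helix_path:
  assumes "t \<in> Dv"
  shows "omega (helix_path r h s) t = sqrt ((r s)\<^sup>2 + (h s)\<^sup>2)"
proof -
  have "(r s * sin t)\<^sup>2 + (r s * cos t)\<^sup>2 = (r s)\<^sup>2"
    by (metis distrib_left mult.right_neutral power_mult_distrib sin_cos_squared_add)
  then show ?thesis
    unfolding omega_def cdot_helix_path[OF assms] norm_eq_sqrt_inner inner_vector3
    by (simp add: power2_eq_square[symmetric])
qed

context
  fixes r h :: "real \<Rightarrow> real" and r' h' s :: real
  assumes s: "s \<in> Iv"
    and r': "(r has_real_derivative r') (at s within Iv)"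
    and h': "(h has_real_derivative h') (at s within Iv)"
begin

lemma pds_helix_path: "pds (helix_path r h) s t = vector [r' * cos t, r' * sin t, h' * t]"
  unfolding pds_def helix_path_def using s
  by (intro vector_derivative_within_unit_interval[folded Iv_def] has_vector_derivative_vector3)
    (auto simp: Iv_def intro!: derivative_eq_intros r'[unfolded Iv_def] h'[unfolded Iv_def])

lemma nablaT_pds_helix_path:
  assumes "t \<in> Dv"
  shows "nablaT (helix_path r h s) (pds (helix_path r h) s) t
    = (1 / sqrt ((r s)\<^sup>2 + (h s)\<^sup>2)) *\<^sub>R vector [- (r' * sin t), r' * cos t, h']"
proof -
  have "vector_derivative (pds (helix_path r h) s) (at t within Dv) = vector [- (r' * sin t), r' * cos t, h']"
    unfolding pds_helix_path using assms
    by (intro vector_derivative_within_unit_interval[folded Dv_def] has_vector_derivative_vector3)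
      (auto simp: Dv_def intro!: derivative_eq_intros)
  then show ?thesis
    unfolding nablaT_def omega_helix_path[OF assms] by simp
qed

lemma nablaT_nablaT_pds_helix_path:
  assumes "t \<in> Dv"
  shows "nablaT (helix_path r h s) (nablaT (helix_path r h s) (pds (helix_path r h) s)) t
    = vector [- (r' * cos t) / ((r s)\<^sup>2 + (h s)\<^sup>2), - (r' * sin t) / ((r s)\<^sup>2 + (h s)\<^sup>2), 0]"
proof -
  define w where "w = sqrt ((r s)\<^sup>2 + (h s)\<^sup>2)"
  have "((\<lambda>t. vector [- (r' * sin t) / w, r' * cos t / w, h' / w] :: real^3) has_vector_derivative
      vector [- (r' * cos t) / w, - (r' * sin t) / w, 0 / w]) (at t within Dv)"
    by (intro has_vector_derivative_vector3 DERIV_cdivide) (auto intro!: derivative_eq_intros)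
  then have "vector_derivative (nablaT (helix_path r h s) (pds (helix_path r h) s)) (at t within Dv)
      = vector [- (r' * cos t) / w, - (r' * sin t) / w, 0]"
    using assms nablaT_pds_helix_path
    by (intro vector_derivative_within_unit_interval[folded Dv_def])
      (auto simp: Dv_def w_def scaleR_vector3 intro: has_vector_derivative_transform)
  moreover have "(r s)\<^sup>2 + (h s)\<^sup>2 = w * w"
    unfolding w_def by simp
  ultimately show ?thesis
    unfolding nablaT_def omega_helix_path[OF assms] w_def[symmetric]
    by (simp add: scaleR_vector3)
qed

lemma eta_inner_Tvec_helix_path:
  assumes "t \<in> Dv"
  shows "eta (helix_path r h) s t \<bullet> Tvec (helix_path r h s) t
    = h s * h' * t / sqrt ((r s)\<^sup>2 + (h s)\<^sup>2)"
proof -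
  define q where "q = (r s)\<^sup>2 + (h s)\<^sup>2"
  have "eta (helix_path r h) s t \<bullet> Tvec (helix_path r h s) t = (1 / sqrt q) *
      ((r' * cos t + r' * cos t / q) * (- (r s * sin t)) + (r' * sin t + r' * sin t / q) * (r s * cos t)
       + h' * t * h s)"
    unfolding eta_def Tvec_def pds_helix_path nablaT_nablaT_pds_helix_path[OF assms]
      cdot_helix_path[OF assms] omega_helix_path[OF assms] diff_vector3 scaleR_vector3 inner_vector3 q_def
    by (simp add: ring_distribs)
  also have "\<dots> = h s * h' * t / sqrt q"
    by (simp add: algebra_simps)
  finally show ?thesis
    unfolding q_def .
qed

lemma Gmet_pds_helix_path:
  "Gmet (helix_path r h s) (pds (helix_path r h) s) (pds (helix_path r h) s)
    = integral Dv (\<lambda>t. ((r')\<^sup>2 + (h' * t)\<^sup>2 + ((r')\<^sup>2 + (h')\<^sup>2) / ((r s)\<^sup>2 + (h s)\<^sup>2))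
        * sqrt ((r s)\<^sup>2 + (h s)\<^sup>2))"
  unfolding Gmet_def
proof (intro integral_cong)
  fix t assume t: "t \<in> Dv"
  have circle: "(sin t)\<^sup>2 * x + (cos t)\<^sup>2 * x = x" for x
    by (metis distrib_right mult_1 sin_cos_squared_add)
  have "pds (helix_path r h) s t \<bullet> pds (helix_path r h) s t = (r')\<^sup>2 + (h' * t)\<^sup>2"
    unfolding pds_helix_path inner_vector3 using circle[of "(r')\<^sup>2"]
    by (simp add: power2_eq_square algebra_simps)
  moreover have "nablaT (helix_path r h s) (pds (helix_path r h) s) t \<bullet>
      nablaT (helix_path r h s) (pds (helix_path r h) s) t = ((r')\<^sup>2 + (h')\<^sup>2) / ((r s)\<^sup>2 + (h s)\<^sup>2)"
    unfolding nablaT_pds_helix_path[OF t] scaleR_vector3 inner_vector3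
    using circle[of "(r')\<^sup>2 / ((r s)\<^sup>2 + (h s)\<^sup>2)"]
    by (simp add: power2_eq_square algebra_simps add_divide_distrib)
  ultimately show "(pds (helix_path r h) s t \<bullet> pds (helix_path r h) s t
      + nablaT (helix_path r h s) (pds (helix_path r h) s) t \<bullet> nablaT (helix_path r h s) (pds (helix_path r h) s) t)
      * omega (helix_path r h s) t
    = ((r')\<^sup>2 + (h' * t)\<^sup>2 + ((r')\<^sup>2 + (h')\<^sup>2) / ((r s)\<^sup>2 + (h s)\<^sup>2)) * sqrt ((r s)\<^sup>2 + (h s)\<^sup>2)"
    by (simp add: omega_helix_path[OF t])
qed

lemma speed_helix_path:
  assumes "h' = 0"
  shows "speed (helix_path r h) s
    = sqrt ((r')\<^sup>2 * (sqrt ((r s)\<^sup>2 + (h s)\<^sup>2) + 1 / sqrt ((r s)\<^sup>2 + (h s)\<^sup>2)))"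
proof -
  define w where "w = sqrt ((r s)\<^sup>2 + (h s)\<^sup>2)"
  have "(r s)\<^sup>2 + (h s)\<^sup>2 = w\<^sup>2"
    unfolding w_def by simp
  then have "Gmet (helix_path r h s) (pds (helix_path r h) s) (pds (helix_path r h) s)
      = ((r')\<^sup>2 + (r')\<^sup>2 / w\<^sup>2) * w"
    unfolding Gmet_pds_helix_path assms w_def[symmetric] by (simp add: Dv_def)
  also have "\<dots> = (r')\<^sup>2 * (w + 1 / w)"
    by (cases "w = 0") (simp_all add: field_simps power2_eq_square)
  finally show ?thesis
    unfolding speed_def w_def by simp
qed

end

definition helix_speed_squared :: "(real \<Rightarrow> real) \<Rightarrow> (real \<Rightarrow> real) \<Rightarrow> (real \<Rightarrow> real) \<Rightarrow> real \<Rightarrow> real"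
  where "helix_speed_squared r h r' s
    = (r' s)\<^sup>2 * (sqrt ((r s)\<^sup>2 + (h s)\<^sup>2) + 1 / sqrt ((r s)\<^sup>2 + (h s)\<^sup>2))"

lemma horizontal_helix_path_iff:
  assumes "\<And>s. s \<in> Iv \<Longrightarrow> (r has_real_derivative r' s) (at s within Iv)"
    and "\<And>s. s \<in> Iv \<Longrightarrow> (h has_real_derivative h' s) (at s within Iv)"
    and "\<And>s. s \<in> Iv \<Longrightarrow> h s \<noteq> 0"
  shows "horizontal (helix_path r h) \<longleftrightarrow> (\<forall>s\<in>Iv. h' s = 0)"
proof
  assume "horizontal (helix_path r h)"
  then have "h s * h' s / sqrt ((r s)\<^sup>2 + (h s)\<^sup>2) = 0" if "s \<in> Iv" for s
    using eta_inner_Tvec_helix_path[OF that assms(1,2)[OF that], of 1] that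
    unfolding horizontal_def by (simp add: Dv_def)
  then show "\<forall>s\<in>Iv. h' s = 0"
    using assms(3) by fastforce
next
  assume "\<forall>s\<in>Iv. h' s = 0"
  then show "horizontal (helix_path r h)"
    unfolding horizontal_def using eta_inner_Tvec_helix_path[OF _ assms(1,2)] by simp
qed

lemma geodesic_helix_path_iff:
  assumes "\<And>s. s \<in> Iv \<Longrightarrow> (r has_real_derivative r' s) (at s within Iv)"
    and "\<And>s. s \<in> Iv \<Longrightarrow> (h has_real_derivative 0) (at s within Iv)"
  shows "geodesic (helix_path r h) \<longleftrightarrow> (\<exists>v. \<forall>s\<in>Iv. helix_speed_squared r h r' s = v)"
proof -
  have speed: "speed (helix_path r h) s = sqrt (helix_speed_squared r h r' s)" if "s \<in> Iv" for s
    unfolding helix_speed_squared_def using speed_helix_path[OF that assms[OF that]] by simp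
  have "helix_speed_squared r h r' s \<ge> 0" for s
    unfolding helix_speed_squared_def by simp
  then have "(\<exists>v. \<forall>s\<in>Iv. sqrt (helix_speed_squared r h r' s) = v)
      \<longleftrightarrow> (\<exists>v. \<forall>s\<in>Iv. helix_speed_squared r h r' s = v)"
    by (metis real_sqrt_pow2)
  then show ?thesis
    unfolding geodesic_def using speed by simp
qed

lemma helix_speed_squared_differentiable:
  assumes "s \<in> Iv" "h s \<noteq> 0"
    and "(r has_real_derivative r' s) (at s within Iv)"
    and "(h has_real_derivative h' s) (at s within Iv)"
    and "(r' has_real_derivative r'') (at s within Iv)"
  shows "helix_speed_squared r h r' differentiable (at s within Iv)"
proof -
  have pos: "(r s)\<^sup>2 + (h s)\<^sup>2 > 0"
    using assms(2) by (simp add: add_nonneg_pos)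
  have "((\<lambda>x. (r x)\<^sup>2 + (h x)\<^sup>2) has_real_derivative 2 * r s * r' s + 2 * h s * h' s)
      (at s within Iv)"
    by (auto intro!: derivative_eq_intros assms(3,4))
  from DERIV_chain2[OF DERIV_real_sqrt[OF pos] this]
  have sqrt: "((\<lambda>x. sqrt ((r x)\<^sup>2 + (h x)\<^sup>2)) has_real_derivative
      inverse (sqrt ((r s)\<^sup>2 + (h s)\<^sup>2)) / 2 * (2 * r s * r' s + 2 * h s * h' s)) (at s within Iv)" .
  have "sqrt ((r s)\<^sup>2 + (h s)\<^sup>2) \<noteq> 0"
    using assms(2) by simp
  from DERIV_mult[OF DERIV_power[OF assms(5)] DERIV_add[OF sqrt DERIV_divide[OF DERIV_const sqrt this]]]
  show ?thesis
    unfolding helix_speed_squared_def real_differentiable_def by blast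
qed

theorem mainTheorem7:
  fixes r h :: "real \<Rightarrow> real"
  assumes "smooth_on Iv r" and "smooth_on Iv h"
    and "\<forall>s\<in>Iv. r s > 0" and "\<forall>s\<in>Iv. h s \<noteq> 0"
  shows "(horizontal (helix_path r h) \<and> geodesic (helix_path r h)) \<longleftrightarrow>
    ((\<forall>s\<in>Iv. dI h s = 0) \<and>
     (\<forall>s\<in>Iv. dI (\<lambda>x. (dI r x)\<^sup>2 * (sqrt ((r x)\<^sup>2 + (h x)\<^sup>2) + 1 / sqrt ((r x)\<^sup>2 + (h x)\<^sup>2))) s = 0))"
proof -
  obtain r' where r': "\<And>s. s \<in> Iv \<Longrightarrow> (r has_real_derivative r' s) (at s within Iv)"
    and "smooth_on Iv r'"
    using smooth_on_derivative[OF assms(1)] by blast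
  then obtain r'' where r'': "\<And>s. s \<in> Iv \<Longrightarrow> (r' has_real_derivative r'' s) (at s within Iv)"
    using smooth_on_derivative by blast
  obtain h' where h': "\<And>s. s \<in> Iv \<Longrightarrow> (h has_real_derivative h' s) (at s within Iv)"
    using smooth_on_derivative[OF assms(2)] by blast
  have speed_squared: "dI (\<lambda>x. (dI r x)\<^sup>2 * (sqrt ((r x)\<^sup>2 + (h x)\<^sup>2) + 1 / sqrt ((r x)\<^sup>2 + (h x)\<^sup>2))) s
      = dI (helix_speed_squared r h r') s" if "s \<in> Iv" for s
    unfolding helix_speed_squared_def using that dI_eq_derivative[OF _ r'] by (intro dI_cong) auto
  have horizontal: "horizontal (helix_path r h) \<longleftrightarrow> (\<forall>s\<in>Iv. dI h s = 0)"
    using horizontal_helix_path_iff[OF r' h'] assms(4) dI_eq_derivative[OF _ h'] by simp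
  have "geodesic (helix_path r h) \<longleftrightarrow> (\<forall>s\<in>Iv. dI (helix_speed_squared r h r') s = 0)"
    if "\<forall>s\<in>Iv. dI h s = 0"
  proof -
    have "(h has_real_derivative 0) (at s within Iv)" if "s \<in> Iv" for s
      using h'[OF that] dI_eq_derivative[OF that h'[OF that]] \<open>\<forall>s\<in>Iv. dI h s = 0\<close> that by simp
    moreover have "helix_speed_squared r h r' differentiable (at s within Iv)" if "s \<in> Iv" for s
      using helix_speed_squared_differentiable[of s h r r' h', OF that _ r'[OF that] h'[OF that] r''[OF that]]
        assms(4) that by blast
    ultimately show ?thesis
      using geodesic_helix_path_iff[OF r'] dI_eq_0_iff_constant_on by simp
  qed
  then show ?thesis
    using horizontal speed_squared by auto
qed

end
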